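(* Let $X$ be a locally compact separable metric space with its Borel $\sigma$-algebra and let $(\mu_n)_{n\in\mathbb{N}}$ be a sequence of real-valued (signed) Borel measures on $X$ converging widely to a signed Borel measure $\mu$. If $\limsup_{n\to\infty}|\mu_n|_{\mathbb{R}}(X)\le|\mu|_{\mathbb{R}}(X)$, then $(\mathcal{R}(\mu_n))_{n\in\mathbb{N}}$ converges to $\mathcal{R}(\mu)$ in Hausdorff distance.
   Context: For a signed measure $\lambda$ on $X$, $|\lambda|_{\mathbb R}(A)=\sup\{\sum_i|\lambda(E_i)|: E_i \text{ pairwise disjoint measurable subsets of }A\}$ is its total variation, and $\mathcal{R}(\lambda)=\overline{\mathrm{conv}}\{\lambda(E):E\text{ Borel}\}\subseteq\mathbb{R}$ its range. Wide convergence: $\int_X\varphi\,d\mu_n\to\int_X\varphi\,d\mu$ for every $\varphi\in C_c(X,\mathbb{R})$. *)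

theory Defs
  imports "HOL-Analysis.Analysis"
begin

definition signed_measure :: "'a measure \<Rightarrow> ('a set \<Rightarrow> real) \<Rightarrow> bool" where
  "signed_measure M m \<longleftrightarrow> m {} = 0 \<and>
     (\<forall>A :: nat \<Rightarrow> 'a set. range A \<subseteq> sets M \<longrightarrow> disjoint_family A \<longrightarrow>
        (%i. m (A i)) sums m (\<Union>i. A i))"

text \<open>Total variation |m|(A): sup over finite families of pairwise disjoint measurable
  subsets of A (ereal-valued, so no boundedness issue arises in the definition).\<close>
definition total_variation :: "'a measure \<Rightarrow> ('a set \<Rightarrow> real) \<Rightarrow> 'a set \<Rightarrow> ereal" where
  "total_variation M m A =
     (SUP F \<in> {F. finite F \<and> F \<subseteq> sets M \<and> disjoint F \<and> \<Union>F \<subseteq> A}.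
        ereal (\<Sum>E\<in>F. \<bar>m E\<bar>))"

definition signed_range :: "'a measure \<Rightarrow> ('a set \<Rightarrow> real) \<Rightarrow> real set" where
  "signed_range M m = closure (convex hull (m ` sets M))"

definition pos_variation :: "'a measure \<Rightarrow> ('a set \<Rightarrow> real) \<Rightarrow> 'a set \<Rightarrow> ennreal" where
  "pos_variation M m A = (SUP B \<in> {B \<in> sets M. B \<subseteq> A}. ennreal (m B))"

definition neg_variation :: "'a measure \<Rightarrow> ('a set \<Rightarrow> real) \<Rightarrow> 'a set \<Rightarrow> ennreal" where
  "neg_variation M m A = pos_variation M (%B. - m B) A"

definition signed_integral :: "'a measure \<Rightarrow> ('a set \<Rightarrow> real) \<Rightarrow> ('a \<Rightarrow> real) \<Rightarrow> real" where
  "signed_integral M m f =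
     (\<integral>x. f x \<partial>(measure_of (space M) (sets M) (pos_variation M m)))
   - (\<integral>x. f x \<partial>(measure_of (space M) (sets M) (neg_variation M m)))"

definition hausdorff_dist :: "'a::metric_space set \<Rightarrow> 'a set \<Rightarrow> ereal" where
  "hausdorff_dist A B =
     max (SUP a\<in>A. ereal (infdist a B)) (SUP b\<in>B. ereal (infdist b A))"

definition Cc :: "('a::topological_space \<Rightarrow> real) set" where
  "Cc = {f. continuous_on UNIV f \<and> compact (closure {x. f x \<noteq> 0})}"

end

theory Submission
  imports Defs
begin

text \<open>By the Jordan decomposition the range of a signed measure \<open>m\<close> on \<open>X\<close> is the interval
  \<open>[-m\<^sup>-(X), m\<^sup>+(X)]\<close> and its total variation is \<open>m\<^sup>+(X) + m\<^sup>-(X)\<close>. Wide convergence makes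
  \<open>m\<^sup>+(X)\<close> lower semicontinuous: inner regularity of \<open>\<nu>\<^sup>+\<close> and outer regularity of \<open>\<nu>\<^sup>-\<close>
  give a compactly supported Urysohn function \<open>0 \<le> \<phi> \<le> 1\<close> with \<open>\<integral>\<phi> d\<nu>\<close> close to
  \<open>\<nu>\<^sup>+(X)\<close>, while \<open>\<integral>\<phi> d\<mu>\<^sub>n \<le> \<mu>\<^sub>n\<^sup>+(X)\<close>. Applied to \<open>\<mu>\<^sub>n\<close> and \<open>-\<mu>\<^sub>n\<close>, together with
  the hypothesis on the total variations, this forces \<open>\<mu>\<^sub>n\<^sup>\<plusminus>(X) \<rightarrow> \<nu>\<^sup>\<plusminus>(X)\<close>, i.e.\ the
  endpoints of the ranges converge.\<close>

section \<open>Finite additivity and boundedness of signed measures\<close>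

lemma signed_measure_empty: "signed_measure M m \<Longrightarrow> m {} = 0"
  by (simp add: signed_measure_def)

lemma signed_measure_sums:
  "signed_measure M m \<Longrightarrow> range A \<subseteq> sets M \<Longrightarrow> disjoint_family A \<Longrightarrow>
    (\<lambda>i. m (A i)) sums m (\<Union>i. A i)"
  unfolding signed_measure_def by blast

lemma signed_measure_Un:
  assumes sm: "signed_measure M m" and "A \<in> sets M" "B \<in> sets M" "A \<inter> B = {}"
  shows "m (A \<union> B) = m A + m B"
proof -
  have "range (binaryset A B) \<subseteq> sets M" "disjoint_family (binaryset A B)"
    using assms(2-4) by (auto simp: range_binaryset_eq disjoint_family_on_def binaryset_def)
  then have "(\<lambda>i. m (binaryset A B i)) sums m (A \<union> B)"
    using signed_measure_sums[OF sm, of "binaryset A B"] by (simp add: UN_binaryset_eq)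
  moreover have "(\<lambda>i. m (binaryset A B i)) sums (m A + m B)"
    by (rule binaryset_sums) (simp add: signed_measure_empty[OF sm])
  ultimately show ?thesis
    by (rule sums_unique2)
qed

lemma signed_measure_Int_Diff:
  assumes "signed_measure M m" "A \<in> sets M" "B \<in> sets M"
  shows "m A = m (A \<inter> B) + m (A - B)"
  using signed_measure_Un[OF assms(1), of "A \<inter> B" "A - B"] assms(2,3)
  by (simp add: Int_Diff_Un Int_Diff_disjoint)

lemma signed_measure_Diff:
  assumes "signed_measure M m" "A \<in> sets M" "B \<in> sets M" "B \<subseteq> A"
  shows "m (A - B) = m A - m B"
  using signed_measure_Int_Diff[OF assms(1-3)] assms(4) by (simp add: Int_absorb1)

lemma signed_measure_uminus: "signed_measure M m \<Longrightarrow> signed_measure M (\<lambda>A. - m A)"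
  unfolding signed_measure_def by (simp add: sums_minus)

lemma signed_measure_finite_Union:
  assumes sm: "signed_measure M m"
  shows "finite F \<Longrightarrow> F \<subseteq> sets M \<Longrightarrow> disjoint F \<Longrightarrow> m (\<Union>F) = (\<Sum>E\<in>F. m E)"
proof (induction F rule: finite_induct)
  case empty
  then show ?case by (simp add: signed_measure_empty[OF sm])
next
  case (insert E F)
  have "E \<inter> \<Union>F = {}"
    using insert.hyps(2) insert.prems(2) by (auto simp: pairwise_insert disjnt_def)
  moreover have "E \<in> sets M" "\<Union>F \<in> sets M"
    using insert.hyps(1) insert.prems(1) by auto
  ultimately have "m (\<Union>(insert E F)) = m E + m (\<Union>F)"
    by (simp add: signed_measure_Un[OF sm])
  also have "m (\<Union>F) = (\<Sum>E\<in>F. m E)"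
    using insert.IH insert.prems by (simp add: pairwise_insert)
  finally show ?case
    using insert.hyps by simp
qed

lemma signed_measure_unbounded_split:
  assumes sm: "signed_measure M m" and A: "A \<in> sets M"
    and unbdd: "\<forall>c. \<exists>B\<in>sets M. B \<subseteq> A \<and> c < m B"
  shows "\<exists>A'\<in>sets M. A' \<subseteq> A \<and> (\<forall>c. \<exists>B\<in>sets M. B \<subseteq> A' \<and> c < m B) \<and> 1 \<le> \<bar>m (A - A')\<bar>"
proof -
  obtain B where B: "B \<in> sets M" "B \<subseteq> A" "1 + \<bar>m A\<bar> < m B"
    using unbdd by blast
  have mAB: "m (A - B) = m A - m B"
    by (rule signed_measure_Diff[OF sm A B(1,2)])
  have "(\<forall>c. \<exists>E\<in>sets M. E \<subseteq> B \<and> c < m E) \<or> (\<forall>c. \<exists>E\<in>sets M. E \<subseteq> A - B \<and> c < m E)"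
  proof (rule ccontr)
    assume "\<not> ?thesis"
    then obtain b c where b: "\<forall>E\<in>sets M. E \<subseteq> B \<longrightarrow> m E \<le> b"
      and c: "\<forall>E\<in>sets M. E \<subseteq> A - B \<longrightarrow> m E \<le> c"
      by (auto simp: not_less)
    obtain E where E: "E \<in> sets M" "E \<subseteq> A" "b + c < m E"
      using unbdd by blast
    have "m E = m (E \<inter> B) + m (E - B)"
      by (rule signed_measure_Int_Diff[OF sm E(1) B(1)])
    also have "\<dots> \<le> b + c"
    proof (rule add_mono)
      show "m (E \<inter> B) \<le> b"
        using b E(1) B(1) by blast
      show "m (E - B) \<le> c"
        using c E(1,2) B(1) by blast
    qed
    finally show False
      using E(3) by simp
  qed
  then show ?thesis
  proof
    assume "\<forall>c. \<exists>E\<in>sets M. E \<subseteq> B \<and> c < m E"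
    moreover have "1 \<le> \<bar>m (A - B)\<bar>"
      using mAB B(3) by linarith
    ultimately show ?thesis
      using B(1,2) by blast
  next
    assume "\<forall>c. \<exists>E\<in>sets M. E \<subseteq> A - B \<and> c < m E"
    moreover have "1 \<le> \<bar>m (A - (A - B))\<bar>"
      using B(2,3) by (simp add: Diff_Diff_Int Int_absorb1)
    moreover have "A - B \<in> sets M"
      using A B(1) by blast
    ultimately show ?thesis
      by blast
  qed
qed

text \<open>An unbounded signed measure would allow to peel off, forever, disjoint pieces of
  measure at least 1 in absolute value, contradicting the convergence of the series of their measures.\<close>
lemma signed_measure_bdd_above:
  assumes sm: "signed_measure M m"
  shows "bdd_above (m ` sets M)"
proof (rule ccontr)
  let ?unbdd = "\<lambda>A. A \<in> sets M \<and> (\<forall>c. \<exists>B\<in>sets M. B \<subseteq> A \<and> c < m B)"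
  assume "\<not> bdd_above (m ` sets M)"
  then have unbdd_space: "?unbdd (space M)"
    by (auto simp: bdd_above_def not_le) (meson sets.sets_into_space)
  have "\<exists>S. \<forall>n. ?unbdd (S n) \<and> S (Suc n) \<subseteq> S n \<and> 1 \<le> \<bar>m (S n - S (Suc n))\<bar>"
  proof (rule dependent_nat_choice)
    show "\<exists>A. ?unbdd A"
      using unbdd_space by blast
    fix A assume "?unbdd A"
    then show "\<exists>A'. ?unbdd A' \<and> A' \<subseteq> A \<and> 1 \<le> \<bar>m (A - A')\<bar>"
      using signed_measure_unbounded_split[OF sm, of A] by blast
  qed
  then obtain S where S: "\<And>n. ?unbdd (S n)" "\<And>n. S (Suc n) \<subseteq> S n"
    and big: "\<And>n. 1 \<le> \<bar>m (S n - S (Suc n))\<bar>"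
    by blast
  define D where "D n = S n - S (Suc n)" for n
  have "disjoint_family (\<lambda>n. (- S (Suc n)) - (- S n))"
    by (rule disjoint_family_Suc) (use S(2) in blast)
  then have "disjoint_family D"
    by (simp add: D_def[abs_def] Diff_eq Int_commute)
  have "range D \<subseteq> sets M"
    using S(1) by (auto simp: D_def)
  then have "(\<lambda>n. m (D n)) sums m (\<Union>n. D n)"
    using signed_measure_sums[OF sm] \<open>disjoint_family D\<close> by blast
  then have "(\<lambda>n. m (D n)) \<longlonglongrightarrow> 0"
    using summable_LIMSEQ_zero sums_summable by blast
  then have "eventually (\<lambda>n. \<bar>m (D n)\<bar> < 1) sequentially"
    by (intro order_tendstoD(2)[OF tendsto_rabs_zero]) simp_all
  with big show False
    unfolding eventually_sequentially D_def by (meson le_refl not_le)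
qed

section \<open>The positive variation\<close>

lemma ennreal_cSUP:
  assumes "bdd_above (f ` A)" "A \<noteq> {}"
  shows "ennreal (SUP a\<in>A. f a) = (SUP a\<in>A. ennreal (f a))"
proof -
  have "ennreal (Sup (f ` A)) = Sup (ennreal ` f ` A)"
    by (rule continuous_at_Sup_mono)
       (auto simp: mono_def ennreal_leI assms continuous_at_imp_continuous_at_within
          intro!: continuous_on_interior[of UNIV] continuous_on_ennreal continuous_on_id)
  then show ?thesis
    by (simp add: image_comp)
qed

definition upper_variation :: "'a measure \<Rightarrow> ('a set \<Rightarrow> real) \<Rightarrow> 'a set \<Rightarrow> real" where
  "upper_variation M m A = (SUP B\<in>{B \<in> sets M. B \<subseteq> A}. m B)"

abbreviation pos_variation_measure :: "'a measure \<Rightarrow> ('a set \<Rightarrow> real) \<Rightarrow> 'a measure" where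
  "pos_variation_measure M m \<equiv> measure_of (space M) (sets M) (pos_variation M m)"

lemma sets_pos_variation_measure: "sets (pos_variation_measure M m) = sets M"
  by (rule sets.sets_measure_of_eq)

context
  fixes M :: "'a measure" and m :: "'a set \<Rightarrow> real"
  assumes sm: "signed_measure M m"
begin

lemma bdd_above_signed_measure_subsets: "bdd_above (m ` {B \<in> sets M. B \<subseteq> A})"
  by (rule bdd_above_mono[OF signed_measure_bdd_above[OF sm]]) auto

lemma upper_variation_upper: "B \<in> sets M \<Longrightarrow> B \<subseteq> A \<Longrightarrow> m B \<le> upper_variation M m A"
  unfolding upper_variation_def
  by (rule cSUP_upper[OF _ bdd_above_signed_measure_subsets]) simp

lemma upper_variation_least:
  "(\<And>B. B \<in> sets M \<Longrightarrow> B \<subseteq> A \<Longrightarrow> m B \<le> c) \<Longrightarrow> upper_variation M m A \<le> c"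
  unfolding upper_variation_def by (rule cSUP_least) auto

lemma upper_variation_nonneg: "0 \<le> upper_variation M m A"
  using upper_variation_upper[of "{}" A] signed_measure_empty[OF sm] by simp

lemma upper_variation_empty: "upper_variation M m {} = 0"
  using upper_variation_least[of "{}" 0] upper_variation_nonneg[of "{}"]
  by (simp add: signed_measure_empty[OF sm])

lemma upper_variation_mono: "A \<subseteq> A' \<Longrightarrow> upper_variation M m A \<le> upper_variation M m A'"
  by (rule upper_variation_least) (auto intro: upper_variation_upper)

lemma upper_variation_approx:
  assumes "0 < e"
  shows "\<exists>B\<in>sets M. B \<subseteq> A \<and> upper_variation M m A - e < m B"
proof (rule ccontr)
  assume "\<not> ?thesis"
  then have "upper_variation M m A \<le> upper_variation M m A - e"
    by (intro upper_variation_least) (auto simp: not_less)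
  with assms show False
    by simp
qed

lemma pos_variation_eq_upper_variation: "pos_variation M m A = ennreal (upper_variation M m A)"
  unfolding pos_variation_def upper_variation_def
  by (rule ennreal_cSUP[OF bdd_above_signed_measure_subsets, symmetric]) auto

lemma upper_variation_Un:
  assumes A: "A \<in> sets M" and A': "A' \<in> sets M" and disj: "A \<inter> A' = {}"
  shows "upper_variation M m (A \<union> A') = upper_variation M m A + upper_variation M m A'"
proof (rule antisym)
  show "upper_variation M m (A \<union> A') \<le> upper_variation M m A + upper_variation M m A'"
  proof (rule upper_variation_least)
    fix E assume E: "E \<in> sets M" "E \<subseteq> A \<union> A'"
    have "m E = m (E \<inter> A) + m (E - A)"
      by (rule signed_measure_Int_Diff[OF sm E(1) A])
    also have "\<dots> \<le> upper_variation M m A + upper_variation M m A'"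
      using E A by (intro add_mono upper_variation_upper) auto
    finally show "m E \<le> upper_variation M m A + upper_variation M m A'" .
  qed
  have pair: "m B + m C \<le> upper_variation M m (A \<union> A')"
    if "B \<in> sets M" "B \<subseteq> A" "C \<in> sets M" "C \<subseteq> A'" for B C
  proof -
    have "m B + m C = m (B \<union> C)"
      using that disj by (intro signed_measure_Un[OF sm, symmetric]) auto
    also have "\<dots> \<le> upper_variation M m (A \<union> A')"
      using that by (intro upper_variation_upper) auto
    finally show ?thesis .
  qed
  have "m B \<le> upper_variation M m (A \<union> A') - upper_variation M m A'"
    if "B \<in> sets M" "B \<subseteq> A" for B
  proof -
    have "upper_variation M m A' \<le> upper_variation M m (A \<union> A') - m B"
      using pair[OF that] by (intro upper_variation_least) (simp add: algebra_simps)
    then show ?thesis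
      by simp
  qed
  then have "upper_variation M m A \<le> upper_variation M m (A \<union> A') - upper_variation M m A'"
    by (rule upper_variation_least)
  then show "upper_variation M m A + upper_variation M m A' \<le> upper_variation M m (A \<union> A')"
    by simp
qed

lemma upper_variation_sums:
  assumes A: "range A \<subseteq> sets M" and disj: "disjoint_family A"
  shows "(\<lambda>i. upper_variation M m (A i)) sums upper_variation M m (\<Union>i. A i)"
proof -
  have partial: "(\<Sum>i<n. upper_variation M m (A i)) = upper_variation M m (\<Union>i<n. A i)" for n
  proof (induction n)
    case (Suc n)
    have "A i \<inter> A n = {}" if "i < n" for i
      using disjoint_family_onD[OF disj, of i n] that by simp
    then have "upper_variation M m ((\<Union>i<n. A i) \<union> A n) =
        upper_variation M m (\<Union>i<n. A i) + upper_variation M m (A n)"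
      using A by (intro upper_variation_Un) auto
    moreover have "(\<Union>i<Suc n. A i) = (\<Union>i<n. A i) \<union> A n"
      by (auto simp: lessThan_Suc)
    ultimately show ?case
      using Suc by simp
  qed (simp add: upper_variation_empty)
  then have summable: "summable (\<lambda>i. upper_variation M m (A i))"
    by (intro summableI_nonneg_bounded[where x="upper_variation M m (\<Union>i. A i)"])
       (auto simp: upper_variation_nonneg intro!: upper_variation_mono)
  have "(\<Sum>i. upper_variation M m (A i)) \<le> upper_variation M m (\<Union>i. A i)"
    using partial by (intro suminf_le_const[OF summable]) (auto intro!: upper_variation_mono)
  moreover have "upper_variation M m (\<Union>i. A i) \<le> (\<Sum>i. upper_variation M m (A i))"
  proof (rule upper_variation_least)
    fix E assume E: "E \<in> sets M" "E \<subseteq> (\<Union>i. A i)"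
    have "(\<lambda>i. m (E \<inter> A i)) sums m (\<Union>i. E \<inter> A i)"
      using A E(1) disj by (intro signed_measure_sums[OF sm]) (auto simp: disjoint_family_on_def)
    moreover have "(\<Union>i. E \<inter> A i) = E"
      using E(2) by auto
    moreover have "m (E \<inter> A i) \<le> upper_variation M m (A i)" for i
      using A E(1) by (intro upper_variation_upper) auto
    ultimately show "m E \<le> (\<Sum>i. upper_variation M m (A i))"
      by (intro sums_le[OF _ _ summable_sums[OF summable]]) auto
  qed
  ultimately have "(\<Sum>i. upper_variation M m (A i)) = upper_variation M m (\<Union>i. A i)"
    by (rule antisym)
  with summable_sums[OF summable] show ?thesis
    by simp
qed

lemma measure_space_pos_variation: "measure_space (space M) (sets M) (pos_variation M m)"
  unfolding measure_space_def positive_def countably_additive_def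
  by (simp add: sets.sigma_algebra_axioms pos_variation_eq_upper_variation upper_variation_empty
      suminf_ennreal_eq[OF upper_variation_nonneg upper_variation_sums])

lemma emeasure_pos_variation_measure:
  "A \<in> sets M \<Longrightarrow> emeasure (pos_variation_measure M m) A = ennreal (upper_variation M m A)"
  using measure_space_pos_variation
  by (simp add: emeasure_measure_of_sigma measure_space_def pos_variation_eq_upper_variation)

lemma measure_pos_variation_measure:
  "A \<in> sets M \<Longrightarrow> measure (pos_variation_measure M m) A = upper_variation M m A"
  by (simp add: measure_def emeasure_pos_variation_measure upper_variation_nonneg)

lemma finite_measure_pos_variation_measure: "finite_measure (pos_variation_measure M m)"
  by (rule finite_measureI) (simp add: emeasure_pos_variation_measure)

end

lemma upper_variation_uminus:
  assumes sm: "signed_measure M m" and A: "A \<in> sets M"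
  shows "upper_variation M (\<lambda>B. - m B) A = upper_variation M m A - m A"
proof -
  have m_Diff: "m (A - B) = m A - m B" if "B \<in> sets M" "B \<subseteq> A" for B
    by (rule signed_measure_Diff[OF sm A that])
  have "upper_variation M (\<lambda>B. - m B) A \<le> upper_variation M m A - m A"
    using A m_Diff
    by (intro upper_variation_least[OF signed_measure_uminus[OF sm]])
       (smt (verit) Diff_subset sets.Diff upper_variation_upper[OF sm])
  moreover have "upper_variation M m A \<le> upper_variation M (\<lambda>B. - m B) A + m A"
    using A m_Diff
    by (intro upper_variation_least[OF sm])
       (smt (verit) Diff_subset sets.Diff upper_variation_upper[OF signed_measure_uminus[OF sm]])
  ultimately show ?thesis
    by simp
qed

section \<open>Range and total variation\<close>

lemma closure_convex_hull_real_eq_interval: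
  fixes S :: "real set"
  assumes "S \<subseteq> {a..b}" "a \<in> closure S" "b \<in> closure S"
  shows "closure (convex hull S) = {a..b}"
proof
  show "closure (convex hull S) \<subseteq> {a..b}"
    using assms(1) by (intro closure_minimal hull_minimal) auto
  have "closure S \<subseteq> closure (convex hull S)"
    by (intro closure_mono hull_subset)
  then have "closed_segment a b \<subseteq> closure (convex hull S)"
    using assms(2,3) by (intro closed_segment_subset convex_closure convex_convex_hull) auto
  then show "{a..b} \<subseteq> closure (convex hull S)"
    by (auto simp: closed_segment_eq_real_ivl split: if_splits)
qed

lemma signed_range_eq_interval:
  assumes sm: "signed_measure M m"
  shows "signed_range M m =
    {- upper_variation M (\<lambda>B. - m B) (space M) .. upper_variation M m (space M)}"
  unfolding signed_range_def
proof (rule closure_convex_hull_real_eq_interval)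
  have "m B \<le> upper_variation M m (space M)" "- m B \<le> upper_variation M (\<lambda>B. - m B) (space M)"
    if "B \<in> sets M" for B
    using that sets.sets_into_space
    by (auto intro!: upper_variation_upper[OF sm] upper_variation_upper[OF signed_measure_uminus[OF sm]])
  then show "m ` sets M \<subseteq> {- upper_variation M (\<lambda>B. - m B) (space M) .. upper_variation M m (space M)}"
    by (force simp: minus_le_iff)
  show "upper_variation M m (space M) \<in> closure (m ` sets M)"
    unfolding closure_approachable
    using upper_variation_approx[OF sm, of _ "space M"] upper_variation_upper[OF sm _ sets.sets_into_space]
    by (smt (verit, best) dist_real_def image_eqI)
  show "- upper_variation M (\<lambda>B. - m B) (space M) \<in> closure (m ` sets M)"
    unfolding closure_approachable
    using upper_variation_approx[OF signed_measure_uminus[OF sm], of _ "space M"]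
      upper_variation_upper[OF signed_measure_uminus[OF sm] _ sets.sets_into_space]
    by (smt (verit, best) dist_real_def image_eqI)
qed

lemma total_variation_le:
  assumes sm: "signed_measure M m"
  shows "total_variation M m (space M) \<le>
    ereal (upper_variation M m (space M) + upper_variation M (\<lambda>B. - m B) (space M))"
  unfolding total_variation_def
proof (rule SUP_least)
  fix F assume "F \<in> {F. finite F \<and> F \<subseteq> sets M \<and> disjoint F \<and> \<Union>F \<subseteq> space M}"
  then have F: "finite F" "F \<subseteq> sets M" "disjoint F"
    by auto
  define P where "P = {E. 0 \<le> m E}"
  have union: "m (\<Union>(F \<inter> P)) = (\<Sum>E\<in>F \<inter> P. m E)" "m (\<Union>(F - P)) = (\<Sum>E\<in>F - P. m E)"
    using F by (auto intro!: signed_measure_finite_Union[OF sm] pairwise_subset[OF F(3)])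
  have meas: "\<Union>(F \<inter> P) \<in> sets M" "\<Union>(F - P) \<in> sets M"
    using F by auto
  have "(\<Sum>E\<in>F \<inter> P. \<bar>m E\<bar>) = (\<Sum>E\<in>F \<inter> P. m E)"
    by (rule sum.cong) (auto simp: P_def)
  moreover have "(\<Sum>E\<in>F - P. \<bar>m E\<bar>) = - (\<Sum>E\<in>F - P. m E)"
    by (auto simp: P_def sum_negf[symmetric] intro!: sum.cong)
  moreover have "m (\<Union>(F \<inter> P)) \<le> upper_variation M m (space M)"
    by (rule upper_variation_upper[OF sm meas(1) sets.sets_into_space[OF meas(1)]])
  moreover have "- m (\<Union>(F - P)) \<le> upper_variation M (\<lambda>B. - m B) (space M)"
    by (rule upper_variation_upper[OF signed_measure_uminus[OF sm] meas(2)
          sets.sets_into_space[OF meas(2)]])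
  ultimately have "(\<Sum>E\<in>F. \<bar>m E\<bar>) \<le>
      upper_variation M m (space M) + upper_variation M (\<lambda>B. - m B) (space M)"
    using sum.Int_Diff[OF F(1), of "\<lambda>E. \<bar>m E\<bar>" P] union by linarith
  then show "ereal (\<Sum>E\<in>F. \<bar>m E\<bar>) \<le>
      ereal (upper_variation M m (space M) + upper_variation M (\<lambda>B. - m B) (space M))"
    by simp
qed

lemma signed_measure_diff_le_total_variation:
  assumes sm: "signed_measure M m" and B: "B \<in> sets M" and C: "C \<in> sets M"
  shows "ereal (m B - m C) \<le> total_variation M m (space M)"
proof -
  have "m B - m C = m (B - C) - m (C - B)"
    using signed_measure_Int_Diff[OF sm B C] signed_measure_Int_Diff[OF sm C B]
    by (simp add: Int_commute)
  also have "\<dots> \<le> \<bar>m (B - C)\<bar> + \<bar>m (C - B)\<bar>"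
    by simp
  also have "\<dots> = (\<Sum>E\<in>{B - C, C - B}. \<bar>m E\<bar>)"
  proof (cases "B - C = C - B")
    case True
    then have "C - B = {}"
      by blast
    with True show ?thesis
      by (simp add: signed_measure_empty[OF sm])
  qed simp
  finally have "ereal (m B - m C) \<le> ereal (\<Sum>E\<in>{B - C, C - B}. \<bar>m E\<bar>)"
    by simp
  also have "\<dots> \<le> total_variation M m (space M)"
    unfolding total_variation_def
    using B C sets.sets_into_space
    by (intro SUP_upper) (auto simp: pairwise_def disjnt_def)
  finally show ?thesis .
qed

lemma total_variation_eq:
  assumes sm: "signed_measure M m"
  shows "total_variation M m (space M) =
    ereal (upper_variation M m (space M) + upper_variation M (\<lambda>B. - m B) (space M))"
proof (rule antisym[OF total_variation_le[OF sm]])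
  obtain t where t: "total_variation M m (space M) = ereal t"
    using total_variation_le[OF sm] signed_measure_diff_le_total_variation[OF sm, of "{}" "{}"]
    by (cases "total_variation M m (space M)") auto
  have diff: "m B - m C \<le> t" if "B \<in> sets M" "C \<in> sets M" for B C
    using signed_measure_diff_le_total_variation[OF sm that] t by simp
  have "m B \<le> t - upper_variation M (\<lambda>B. - m B) (space M)" if "B \<in> sets M" for B
  proof -
    have "upper_variation M (\<lambda>B. - m B) (space M) \<le> t - m B"
      using diff[OF that] by (intro upper_variation_least[OF signed_measure_uminus[OF sm]]) force
    then show ?thesis
      by simp
  qed
  then have "upper_variation M m (space M) \<le> t - upper_variation M (\<lambda>B. - m B) (space M)"
    by (intro upper_variation_least[OF sm])
  then show "ereal (upper_variation M m (space M) + upper_variation M (\<lambda>B. - m B) (space M)) \<le>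
      total_variation M m (space M)"
    using t by simp
qed

section \<open>Regularity of finite Borel measures\<close>

definition closed_open_regular :: "'a::topological_space measure \<Rightarrow> 'a set \<Rightarrow> bool" where
  "closed_open_regular M B \<longleftrightarrow>
     (\<forall>e>0. \<exists>F U. closed F \<and> open U \<and> F \<subseteq> B \<and> B \<subseteq> U \<and> measure M (U - F) < e)"

lemma closed_open_regular_closed:
  fixes M :: "'a::metric_space measure"
  assumes "finite_measure M" "sets M = sets borel" "closed F"
  shows "closed_open_regular M F"
  unfolding closed_open_regular_def
proof (intro allI impI)
  interpret finite_measure M by fact
  fix e :: real assume "0 < e"
  show "\<exists>F' U. closed F' \<and> open U \<and> F' \<subseteq> F \<and> F \<subseteq> U \<and> measure M (U - F') < e"
  proof (cases "F = {}")
    case True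
    with \<open>0 < e\<close> show ?thesis
      by (intro exI[of _ "{}"]) auto
  next
    case False
    define G where "G n = {x. infdist x F < 1 / Suc n} - F" for n
    have open_nbhd: "open {x. infdist x F < r}" for r
      by (intro open_Collect_less continuous_intros)
    have "(\<lambda>n. measure M (G n)) \<longlonglongrightarrow> measure M (\<Inter>n. G n)"
    proof (rule finite_Lim_measure_decseq)
      show "range G \<subseteq> sets M"
        using assms(2,3) open_nbhd by (auto simp: G_def)
      show "decseq G"
        by (rule decseq_SucI) (auto simp: G_def frac_le order_less_le_trans)
    qed
    moreover have "(\<Inter>n. G n) = {}"
    proof safe
      fix x assume "x \<in> (\<Inter>n. G n)"
      then have "x \<notin> F" "\<And>n. infdist x F < 1 / Suc n"
        by (auto simp: G_def)
      moreover have "0 < infdist x F"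
        using \<open>x \<notin> F\<close> in_closed_iff_infdist_zero[OF assms(3) False] infdist_nonneg[of x F]
        by simp
      then obtain n where "1 / Suc n < infdist x F"
        by (rule nat_approx_posE)
      ultimately show "x \<in> {}"
        by (metis not_less_iff_gr_or_eq)
    qed
    ultimately obtain n where "measure M (G n) < e"
      using \<open>0 < e\<close> by (metis LIMSEQ_D abs_of_nonneg diff_zero measure_empty measure_nonneg real_norm_def order.refl)
    then show ?thesis
      using assms(3) open_nbhd by (intro exI[of _ F] exI[of _ "{x. infdist x F < 1 / Suc n}"]) (auto simp: G_def)
  qed
qed

lemma closed_open_regular_Compl:
  assumes "closed_open_regular M B"
  shows "closed_open_regular M (- B)"
  unfolding closed_open_regular_def
proof (intro allI impI)
  fix e :: real assume "0 < e"
  with assms obtain F U where "closed F" "open U" "F \<subseteq> B" "B \<subseteq> U" "measure M (U - F) < e"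
    unfolding closed_open_regular_def by metis
  moreover have "- F - - U = U - F"
    by blast
  ultimately show "\<exists>F U. closed F \<and> open U \<and> F \<subseteq> - B \<and> - B \<subseteq> U \<and> measure M (U - F) < e"
    by (intro exI[of _ "- U"] exI[of _ "- F"]) auto
qed

lemma closed_open_regular_UN:
  fixes M :: "'a::topological_space measure"
  assumes "finite_measure M" "sets M = sets borel" "\<And>i::nat. closed_open_regular M (A i)"
  shows "closed_open_regular M (\<Union>i. A i)"
  unfolding closed_open_regular_def
proof (intro allI impI)
  interpret finite_measure M by fact
  fix e :: real assume "0 < e"
  define \<delta> where "\<delta> i = e / 4 * (1 / 2) ^ i" for i :: nat
  have "\<exists>F U. closed F \<and> open U \<and> F \<subseteq> A i \<and> A i \<subseteq> U \<and> measure M (U - F) < \<delta> i" for i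
  proof -
    have "0 < \<delta> i"
      using \<open>0 < e\<close> by (simp add: \<delta>_def)
    with assms(3)[of i] show ?thesis
      unfolding closed_open_regular_def by metis
  qed
  then obtain F U where FU: "\<And>i. closed (F i)" "\<And>i. open (U i)" "\<And>i. F i \<subseteq> A i" "\<And>i. A i \<subseteq> U i"
    and small: "\<And>i. measure M (U i - F i) < \<delta> i"
    by metis
  have meas [measurable]: "F i \<in> sets M" "U i \<in> sets M" for i
    using FU assms(2) by auto
  have "(\<lambda>n. measure M (\<Union>i<n. F i)) \<longlonglongrightarrow> measure M (\<Union>n. \<Union>i<n. F i)"
    by (intro finite_Lim_measure_incseq) (force simp: incseq_def)+
  moreover have "(\<Union>n. \<Union>i<n. F i) = (\<Union>i. F i)"
    by blast
  ultimately obtain N where tail: "measure M (\<Union>i. F i) - measure M (\<Union>i<N. F i) < e / 2"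
    using \<open>0 < e\<close> by (metis LIMSEQ_D abs_less_iff minus_diff_eq real_norm_def half_gt_zero order.refl)
  have \<delta>_sums: "\<delta> sums (e / 2)"
    unfolding \<delta>_def[abs_def] using sums_mult[OF geometric_sums[of "1 / 2"], of "e / 4"] by simp
  have small_le: "measure M (U i - F i) \<le> \<delta> i" for i
    using small[of i] by simp
  have summable: "summable (\<lambda>i. measure M (U i - F i))"
    using small_le by (intro summable_comparison_test'[OF sums_summable[OF \<delta>_sums], of 0]) simp
  have "measure M (\<Union>i. U i - F i) \<le> (\<Sum>i. measure M (U i - F i))"
    using summable by (intro finite_measure_subadditive_countably) auto
  also have "\<dots> \<le> e / 2"
    by (rule sums_le[OF small_le summable_sums[OF summable] \<delta>_sums])
  finally have "measure M (\<Union>i. U i - F i) \<le> e / 2" .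
  moreover have "measure M ((\<Union>i. U i) - (\<Union>i<N. F i)) \<le>
      measure M (\<Union>i. U i - F i) + measure M ((\<Union>i. F i) - (\<Union>i<N. F i))"
    by (rule order.trans[OF finite_measure_mono measure_Un_le]) auto
  moreover have "measure M ((\<Union>i. F i) - (\<Union>i<N. F i)) < e / 2"
    using tail by (subst finite_measure_Diff) auto
  ultimately have "measure M ((\<Union>i. U i) - (\<Union>i<N. F i)) < e"
    by linarith
  moreover have "closed (\<Union>i<N. F i)" "open (\<Union>i. U i)"
    using FU by auto
  ultimately show "\<exists>F' U'. closed F' \<and> open U' \<and> F' \<subseteq> (\<Union>i. A i) \<and> (\<Union>i. A i) \<subseteq> U' \<and>
      measure M (U' - F') < e"
    using FU(3,4) by (intro exI[of _ "\<Union>i<N. F i"] exI[of _ "\<Union>i. U i"]) blast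
qed

lemma closed_open_regular_borel:
  fixes M :: "'a::metric_space measure"
  assumes "finite_measure M" "sets M = sets borel" "B \<in> sets borel"
  shows "closed_open_regular M B"
proof -
  have "B \<in> sigma_sets UNIV (Collect closed)"
    using assms(3) by (simp add: borel_eq_closed)
  then show ?thesis
  proof induction
    case (Basic F)
    then show ?case
      using assms(1,2) by (simp add: closed_open_regular_closed)
  next
    case Empty
    show ?case
      using assms(1,2) by (simp add: closed_open_regular_closed)
  next
    case (Compl B)
    then show ?case
      by (simp add: closed_open_regular_Compl Compl_eq_Diff_UNIV[symmetric])
  next
    case (Union A)
    then show ?case
      by (simp add: closed_open_regular_UN[OF assms(1,2)])
  qed
qed

lemma locally_compact_tight:
  fixes M :: "'a::{metric_space,second_countable_topology} measure"
  assumes lc: "locally_compact_space (euclidean :: 'a topology)"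
    and "finite_measure M" "sets M = sets borel" "0 < e"
  shows "\<exists>K. compact K \<and> measure M (- K) < e"
proof -
  interpret finite_measure M by fact
  define \<U> where "\<U> = {U :: 'a set. open U \<and> compact (closure U)}"
  have "\<Union>\<U> = UNIV"
    using lc locally_compact_space_compact_closure_of[of "euclidean :: 'a topology"]
    by (auto simp: \<U>_def)
  moreover obtain \<V> where \<V>: "\<V> \<subseteq> \<U>" "countable \<V>" "\<Union>\<V> = \<Union>\<U>"
    by (rule Lindelof[of \<U>]) (auto simp: \<U>_def)
  ultimately have "\<V> \<noteq> {}"
    by auto
  define V where "V = from_nat_into \<V>"
  have "(\<Union>i. V i) = UNIV"
    using range_from_nat_into[OF \<open>\<V> \<noteq> {}\<close> \<V>(2)] \<V>(3) \<open>\<Union>\<U> = UNIV\<close> by (simp add: V_def)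
  have compact_V: "compact (closure (V i))" for i
    using from_nat_into[OF \<open>\<V> \<noteq> {}\<close>, of i] \<V>(1) by (auto simp: V_def \<U>_def)
  define K where "K n = (\<Union>i<n. closure (V i))" for n
  have compact_K: "compact (K n)" for n
    using compact_V by (auto simp: K_def)
  then have "range K \<subseteq> sets M"
    using assms(3) by (auto intro: borel_closed compact_imp_closed)
  moreover have "incseq K"
    by (force simp: K_def incseq_def)
  ultimately have "(\<lambda>n. measure M (K n)) \<longlonglongrightarrow> measure M (\<Union>n. K n)"
    by (rule finite_Lim_measure_incseq)
  moreover have "(\<Union>n. K n) = UNIV"
  proof -
    have "x \<in> K (Suc i)" if "x \<in> V i" for x i
      using that closure_subset[of "V i"] by (auto simp: K_def)
    then show ?thesis
      using \<open>(\<Union>i. V i) = UNIV\<close> by (metis UNIV_I UN_iff subsetI subset_antisym)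
  qed
  ultimately obtain n where "measure M UNIV - measure M (K n) < e"
    using \<open>0 < e\<close> by (metis LIMSEQ_D abs_less_iff minus_diff_eq real_norm_def order.refl)
  moreover have "measure M (- K n) = measure M UNIV - measure M (K n)"
    using assms(3) compact_K[of n]
    by (simp add: Compl_eq_Diff_UNIV compact_imp_closed finite_measure_Diff)
  ultimately show ?thesis
    using compact_K by metis
qed

lemma compact_open_regular_borel:
  fixes M :: "'a::{metric_space,second_countable_topology} measure"
  assumes lc: "locally_compact_space (euclidean :: 'a topology)"
    and fin: "finite_measure M" and sb: "sets M = sets borel" and B: "B \<in> sets borel" and "0 < e"
  shows "\<exists>K U. compact K \<and> open U \<and> K \<subseteq> B \<and> B \<subseteq> U \<and> measure M (U - K) < e"
proof -
  interpret finite_measure M by fact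
  obtain F U where FU: "closed F" "open U" "F \<subseteq> B" "B \<subseteq> U" "measure M (U - F) < e / 2"
    using closed_open_regular_borel[OF fin sb B] \<open>0 < e\<close>
    unfolding closed_open_regular_def by (metis half_gt_zero)
  obtain C where C: "compact C" "measure M (- C) < e / 2"
    using locally_compact_tight[OF lc fin sb, of "e / 2"] \<open>0 < e\<close> by auto
  have meas: "U - F \<in> sets M" "- C \<in> sets M"
    using FU(1,2) compact_imp_closed[OF C(1)] sb by auto
  have "measure M (U - F \<inter> C) \<le> measure M ((U - F) \<union> - C)"
    using meas by (intro finite_measure_mono) auto
  also have "\<dots> \<le> measure M (U - F) + measure M (- C)"
    using meas by (rule measure_Un_le)
  finally have "measure M (U - F \<inter> C) < e"
    using FU(5) C(2) by linarith
  moreover have "compact (F \<inter> C)"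
    using FU(1) C(1) by (rule closed_Int_compact)
  ultimately show ?thesis
    using FU(2-4) by (metis Int_lower1 order.trans)
qed

section \<open>Compactly supported test functions\<close>

lemma Cc_Urysohn:
  fixes K U :: "'a::metric_space set"
  assumes lc: "locally_compact_space (euclidean :: 'a topology)"
    and K: "compact K" and U: "open U" and "K \<subseteq> U"
  shows "\<exists>\<phi>\<in>Cc. (\<forall>x. 0 \<le> \<phi> x \<and> \<phi> x \<le> 1) \<and> (\<forall>x\<in>K. \<phi> x = 1) \<and> (\<forall>x. x \<notin> U \<longrightarrow> \<phi> x = 0)"
proof (cases "K = {}")
  case True
  have "(\<lambda>x. 0::real) \<in> Cc"
    by (simp add: Cc_def)
  with True show ?thesis
    by (intro bexI[of _ "\<lambda>x. 0"]) auto
next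
  case False
  obtain V L where VL: "open V" "compact L" "K \<subseteq> V" "V \<subseteq> L"
    using lc K locally_compact_space_compact_closed_compact[of "euclidean :: 'a topology"] by auto
  obtain d where d: "0 < d" "(\<Union>x\<in>K. ball x d) \<subseteq> U \<inter> V"
    using compact_subset_open_imp_ball_epsilon_subset[OF K, of "U \<inter> V"] U VL(1,3) \<open>K \<subseteq> U\<close> by blast
  have near: "x \<in> U \<inter> V" if "infdist x K < d" for x
  proof -
    have "(INF y\<in>K. dist x y) < d"
      using that by (simp add: infdist_notempty[OF False])
    then obtain y where "y \<in> K" "dist x y < d"
      by (subst (asm) cINF_less_iff) (use False in \<open>auto intro: bdd_belowI2[where m=0]\<close>)
    then have "x \<in> (\<Union>x\<in>K. ball x d)"
      by (auto simp: dist_commute)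
    then show ?thesis
      using d(2) by blast
  qed
  define \<phi> where "\<phi> x = max 0 (1 - 2 * infdist x K / d)" for x
  have \<phi>_zero: "\<phi> x = 0" if "d / 2 \<le> infdist x K" for x
  proof -
    have "1 \<le> 2 * infdist x K / d"
      using d(1) that by (simp add: field_simps)
    then show ?thesis
      by (simp add: \<phi>_def)
  qed
  then have "{x. \<phi> x \<noteq> 0} \<subseteq> {x. infdist x K \<le> d / 2}"
    by (smt (verit) mem_Collect_eq subsetI)
  moreover have "closed {x. infdist x K \<le> d / 2}"
    by (intro closed_Collect_le continuous_intros)
  ultimately have "closure {x. \<phi> x \<noteq> 0} \<subseteq> {x. infdist x K \<le> d / 2}"
    by (rule closure_minimal)
  also have "\<dots> \<subseteq> L"
    using near VL(4) d(1) by force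
  finally have "compact (closure {x. \<phi> x \<noteq> 0})"
    using compact_Int_closed[OF VL(2) closed_closure, of "{x. \<phi> x \<noteq> 0}"] by (simp add: Int_absorb1)
  moreover have "continuous_on UNIV \<phi>"
    unfolding \<phi>_def by (intro continuous_intros) (use d(1) in auto)
  ultimately have "\<phi> \<in> Cc"
    by (simp add: Cc_def)
  moreover have "\<phi> x = 0" if "x \<notin> U" for x
  proof -
    have "d \<le> infdist x K"
      using near that by force
    then show ?thesis
      using d(1) by (intro \<phi>_zero) simp
  qed
  moreover have "0 \<le> \<phi> x \<and> \<phi> x \<le> 1" for x
    using d(1) infdist_nonneg[of x K] by (simp add: \<phi>_def)
  ultimately show ?thesis
    by (intro bexI[of _ \<phi>]) (auto simp: \<phi>_def)
qed

lemma integral_between_measures: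
  fixes N :: "'a::topological_space measure"
  assumes "finite_measure N" "sets N = sets borel"
    and \<phi>: "continuous_on UNIV \<phi>" "\<And>x. 0 \<le> \<phi> x \<and> \<phi> x \<le> 1"
    and KU: "K \<in> sets borel" "U \<in> sets borel" "\<And>x. x \<in> K \<Longrightarrow> \<phi> x = 1" "\<And>x. x \<notin> U \<Longrightarrow> \<phi> x = 0"
  shows "measure N K \<le> integral\<^sup>L N \<phi> \<and> integral\<^sup>L N \<phi> \<le> measure N U"
proof -
  interpret finite_measure N by fact
  have sets: "K \<in> sets N" "U \<in> sets N"
    using KU(1,2) assms(2) by auto
  have "\<phi> \<in> borel_measurable N"
    using borel_measurable_continuous_onI[OF \<phi>(1)] by (simp add: measurable_cong_sets[OF assms(2)])
  then have int: "integrable N \<phi>"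
    using \<phi>(2) by (intro integrable_const_bound[where B=1]) auto
  have "measure N K = integral\<^sup>L N (indicator K)"
    using sets(1) by simp
  also have "\<dots> \<le> integral\<^sup>L N \<phi>"
    using sets(1) \<phi>(2) KU(3)
    by (intro integral_mono[OF integrable_real_indicator int]) (auto simp: indicator_def less_top[symmetric])
  finally have "measure N K \<le> integral\<^sup>L N \<phi>" .
  moreover have "integral\<^sup>L N \<phi> \<le> integral\<^sup>L N (indicator U)"
    using sets(2) \<phi>(2) KU(4)
    by (intro integral_mono[OF int integrable_real_indicator]) (auto simp: indicator_def less_top[symmetric])
  ultimately show ?thesis
    using sets(2) by simp
qed

lemma signed_integral_eq:
  "signed_integral M m f =
    integral\<^sup>L (pos_variation_measure M m) f - integral\<^sup>L (pos_variation_measure M (\<lambda>B. - m B)) f"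
  by (simp add: signed_integral_def neg_variation_def[abs_def])

lemma signed_integral_uminus: "signed_integral M (\<lambda>B. - m B) f = - signed_integral M m f"
  by (simp add: signed_integral_eq)

lemma signed_integral_le_upper_variation:
  fixes m :: "'a::topological_space set \<Rightarrow> real"
  assumes sm: "signed_measure borel m"
    and \<phi>: "continuous_on UNIV \<phi>" "\<And>x. 0 \<le> \<phi> x \<and> \<phi> x \<le> 1"
  shows "signed_integral borel m \<phi> \<le> upper_variation borel m UNIV"
proof -
  note sets = sets_pos_variation_measure[of borel m]
  have "integral\<^sup>L (pos_variation_measure borel m) \<phi> \<le> measure (pos_variation_measure borel m) UNIV"
    using integral_between_measures[OF finite_measure_pos_variation_measure[OF sm] sets \<phi>, of "{}" UNIV]
    by simp
  also have "\<dots> = upper_variation borel m UNIV"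
    by (rule measure_pos_variation_measure[OF sm]) simp
  finally have "integral\<^sup>L (pos_variation_measure borel m) \<phi> \<le> upper_variation borel m UNIV" .
  moreover have "0 \<le> integral\<^sup>L (pos_variation_measure borel (\<lambda>B. - m B)) \<phi>"
    using \<phi>(2) by simp
  ultimately show ?thesis
    by (simp add: signed_integral_eq)
qed

lemma upper_variation_approx_by_Cc:
  fixes \<nu> :: "'a::{metric_space,second_countable_topology} set \<Rightarrow> real"
  assumes lc: "locally_compact_space (euclidean :: 'a topology)"
    and sm: "signed_measure borel \<nu>" and "0 < e"
  shows "\<exists>\<phi>\<in>Cc. (\<forall>x. 0 \<le> \<phi> x \<and> \<phi> x \<le> 1) \<and> upper_variation borel \<nu> UNIV - e < signed_integral borel \<nu> \<phi>"
proof -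
  let ?P = "upper_variation borel \<nu> UNIV"
  define Mp where "Mp = pos_variation_measure borel \<nu>"
  define Mn where "Mn = pos_variation_measure borel (\<lambda>B. - \<nu> B)"
  have sm': "signed_measure borel (\<lambda>B. - \<nu> B)"
    by (rule signed_measure_uminus[OF sm])
  have fin: "finite_measure Mp" "finite_measure Mn"
    unfolding Mp_def Mn_def by (intro finite_measure_pos_variation_measure sm sm')+
  have sets: "sets Mp = sets borel" "sets Mn = sets borel"
    unfolding Mp_def Mn_def by (rule sets_pos_variation_measure)+
  have Mp: "measure Mp A = upper_variation borel \<nu> A" if "A \<in> sets borel" for A
    using measure_pos_variation_measure[OF sm that] by (simp add: Mp_def)
  have Mn: "measure Mn A = upper_variation borel \<nu> A - \<nu> A" if "A \<in> sets borel" for A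
    using measure_pos_variation_measure[OF sm' that] upper_variation_uminus[OF sm that]
    by (simp add: Mn_def)
  obtain B where B: "B \<in> sets borel" "?P - e / 4 < \<nu> B"
    using upper_variation_approx[OF sm, of "e / 4" UNIV] \<open>0 < e\<close> by auto
  obtain K U' where K: "compact K" "open U'" "K \<subseteq> B" "B \<subseteq> U'" "measure Mp (U' - K) < e / 4"
    using compact_open_regular_borel[OF lc fin(1) sets(1) B(1), of "e / 4"] \<open>0 < e\<close> by auto
  have K_borel: "K \<in> sets borel"
    using K(1) by (simp add: compact_imp_closed)
  obtain K' U where U: "compact K'" "open U" "K' \<subseteq> K" "K \<subseteq> U" "measure Mn (U - K') < e / 4"
    using compact_open_regular_borel[OF lc fin(2) sets(2) K_borel, of "e / 4"] \<open>0 < e\<close> by auto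
  have K'_borel: "K' \<in> sets borel"
    using U(1) by (simp add: compact_imp_closed)
  obtain \<phi> where \<phi>: "\<phi> \<in> Cc" "\<forall>x. 0 \<le> \<phi> x \<and> \<phi> x \<le> 1" "\<forall>x\<in>K. \<phi> x = 1" "\<forall>x. x \<notin> U \<longrightarrow> \<phi> x = 0"
    using Cc_Urysohn[OF lc K(1) U(2,4)] by blast
  have cont: "continuous_on UNIV \<phi>"
    using \<phi>(1) by (simp add: Cc_def)
  interpret Mp: finite_measure Mp by (rule fin(1))
  interpret Mn: finite_measure Mn by (rule fin(2))
  have "measure Mp B - measure Mp K = measure Mp (B - K)"
    using B(1) K_borel K(3) sets(1) by (simp add: Mp.finite_measure_Diff)
  also have "\<dots> \<le> measure Mp (U' - K)"
    using K(2,4) K_borel sets(1) by (intro Mp.finite_measure_mono) auto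
  also have "\<dots> \<le> integral\<^sup>L Mp \<phi> - measure Mp K + e / 4"
    using integral_between_measures[OF fin(1) sets(1) cont, of K UNIV] \<phi>(2,3) K_borel K(5) by simp
  finally have int_Mp: "\<nu> B - e / 4 \<le> integral\<^sup>L Mp \<phi>"
    using Mp[OF B(1)] upper_variation_upper[OF sm B(1), of B] by simp
  have "integral\<^sup>L Mn \<phi> \<le> measure Mn U"
    using integral_between_measures[OF fin(2) sets(2) cont, of "{}" U] \<phi>(2,4) U(2) by simp
  also have "\<dots> = measure Mn K' + measure Mn (U - K')"
    using U(2,3,4) K'_borel sets(2) by (simp add: Mn.finite_measure_Diff)
  also have "measure Mn K' \<le> measure Mn B"
    using U(3) K(3) B(1) sets(2) by (intro Mn.finite_measure_mono) auto
  also have "measure Mn B \<le> ?P - \<nu> B"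
    using Mn[OF B(1)] upper_variation_mono[OF sm, of B UNIV] by simp
  finally have int_Mn: "integral\<^sup>L Mn \<phi> < ?P - \<nu> B + e / 4"
    using U(5) by simp
  have "?P - e < signed_integral borel \<nu> \<phi>"
    using int_Mp int_Mn B(2) by (simp add: signed_integral_eq Mp_def Mn_def)
  with \<phi>(1,2) show ?thesis
    by blast
qed

section \<open>Convergence of the ranges\<close>

lemma upper_variation_lower_semicontinuous:
  fixes \<mu> :: "nat \<Rightarrow> 'a::{metric_space, second_countable_topology} set \<Rightarrow> real"
  assumes lc: "locally_compact_space (euclidean :: 'a topology)"
    and sm: "\<And>n. signed_measure borel (\<mu> n)" "signed_measure borel \<nu>"
    and wide: "\<And>\<phi>. \<phi> \<in> Cc \<Longrightarrow> (\<lambda>n. signed_integral borel (\<mu> n) \<phi>) \<longlonglongrightarrow> signed_integral borel \<nu> \<phi>"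
    and "0 < e"
  shows "eventually (\<lambda>n. upper_variation borel \<nu> UNIV - e < upper_variation borel (\<mu> n) UNIV) sequentially"
proof -
  obtain \<phi> where \<phi>: "\<phi> \<in> Cc" "\<forall>x. 0 \<le> \<phi> x \<and> \<phi> x \<le> 1"
    and approx: "upper_variation borel \<nu> UNIV - e < signed_integral borel \<nu> \<phi>"
    using upper_variation_approx_by_Cc[OF lc sm(2) \<open>0 < e\<close>] by blast
  have "eventually (\<lambda>n. upper_variation borel \<nu> UNIV - e < signed_integral borel (\<mu> n) \<phi>) sequentially"
    by (rule order_tendstoD(1)[OF wide[OF \<phi>(1)] approx])
  moreover have "signed_integral borel (\<mu> n) \<phi> \<le> upper_variation borel (\<mu> n) UNIV" for n
    using \<phi> by (intro signed_integral_le_upper_variation[OF sm(1)]) (auto simp: Cc_def)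
  ultimately show ?thesis
    by (elim eventually_mono) (rule less_le_trans)
qed

lemma tendsto_of_lower_bounds_and_limsup_sum:
  fixes p q :: "nat \<Rightarrow> real"
  assumes p: "\<And>e. 0 < e \<Longrightarrow> eventually (\<lambda>n. P - e < p n) sequentially"
    and q: "\<And>e. 0 < e \<Longrightarrow> eventually (\<lambda>n. Q - e < q n) sequentially"
    and sum: "limsup (\<lambda>n. ereal (p n + q n)) \<le> ereal (P + Q)"
  shows "p \<longlonglongrightarrow> P" "q \<longlonglongrightarrow> Q"
proof -
  have sum_ev: "eventually (\<lambda>n. p n + q n < P + Q + e) sequentially" if "0 < e" for e
  proof -
    have "limsup (\<lambda>n. ereal (p n + q n)) < ereal (P + Q + e)"
      using sum that by (simp add: le_less_trans)
    then show ?thesis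
      by (auto dest: Limsup_lessD)
  qed
  show "p \<longlonglongrightarrow> P"
  proof (rule order_tendstoI)
    show "eventually (\<lambda>n. a < p n) sequentially" if "a < P" for a
      using p[of "P - a"] that by simp
    show "eventually (\<lambda>n. p n < a) sequentially" if "P < a" for a
    proof -
      have "0 < (a - P) / 2"
        using that by simp
      from eventually_conj[OF q[OF this] sum_ev[OF this]] show ?thesis
        by (rule eventually_mono) (auto simp: field_simps)
    qed
  qed
  show "q \<longlonglongrightarrow> Q"
  proof (rule order_tendstoI)
    show "eventually (\<lambda>n. a < q n) sequentially" if "a < Q" for a
      using q[of "Q - a"] that by simp
    show "eventually (\<lambda>n. q n < a) sequentially" if "Q < a" for a
    proof -
      have "0 < (a - Q) / 2"
        using that by simp
      from eventually_conj[OF p[OF this] sum_ev[OF this]] show ?thesis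
        by (rule eventually_mono) (auto simp: field_simps)
    qed
  qed
qed

lemma hausdorff_dist_interval_le:
  fixes a b c d :: real
  assumes "a \<le> b" "c \<le> d"
  shows "hausdorff_dist {a..b} {c..d} \<le> ereal (max \<bar>a - c\<bar> \<bar>b - d\<bar>)"
proof -
  have clamp: "infdist x {c..d} \<le> max \<bar>a - c\<bar> \<bar>b - d\<bar>"
    if "x \<in> {a..b}" "c \<le> d" for a b c d x :: real
  proof -
    have "max c (min d x) \<in> {c..d}"
      using that(2) by simp
    moreover have "dist x (max c (min d x)) \<le> max \<bar>a - c\<bar> \<bar>b - d\<bar>"
      using that by (auto simp: dist_real_def)
    ultimately show ?thesis
      by (rule infdist_le2)
  qed
  have "(SUP x\<in>{a..b}. ereal (infdist x {c..d})) \<le> ereal (max \<bar>a - c\<bar> \<bar>b - d\<bar>)"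
    using clamp assms(2) by (intro SUP_least) (metis ereal_less_eq(3))
  moreover have "(SUP x\<in>{c..d}. ereal (infdist x {a..b})) \<le> ereal (max \<bar>a - c\<bar> \<bar>b - d\<bar>)"
    using clamp[of _ c d a b] assms(1) by (intro SUP_least) (metis ereal_less_eq(3) abs_minus_commute)
  ultimately show ?thesis
    unfolding hausdorff_dist_def by (rule max.boundedI)
qed

lemma hausdorff_dist_nonneg:
  assumes "A \<noteq> {}"
  shows "0 \<le> hausdorff_dist A B"
proof -
  obtain a where "a \<in> A"
    using assms by blast
  then have "ereal (infdist a B) \<le> (SUP x\<in>A. ereal (infdist x B))"
    by (rule SUP_upper)
  then show ?thesis
    unfolding hausdorff_dist_def by (metis infdist_nonneg ereal_less_eq(3) zero_ereal_def max.coboundedI1 order.trans)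
qed

lemma hausdorff_dist_interval_tendsto:
  fixes a b :: "nat \<Rightarrow> real"
  assumes "a \<longlonglongrightarrow> a0" "b \<longlonglongrightarrow> b0" "\<And>n. a n \<le> b n" "a0 \<le> b0"
  shows "(\<lambda>n. hausdorff_dist {a n..b n} {a0..b0}) \<longlonglongrightarrow> 0"
proof (rule tendsto_sandwich)
  show "eventually (\<lambda>n. 0 \<le> hausdorff_dist {a n..b n} {a0..b0}) sequentially"
    using assms(3) by (simp add: hausdorff_dist_nonneg)
  show "eventually (\<lambda>n. hausdorff_dist {a n..b n} {a0..b0} \<le> ereal (max \<bar>a n - a0\<bar> \<bar>b n - b0\<bar>)) sequentially"
    using assms(3,4) hausdorff_dist_interval_le by (intro always_eventually) blast
  have "(\<lambda>n. max \<bar>a n - a0\<bar> \<bar>b n - b0\<bar>) \<longlonglongrightarrow> max \<bar>a0 - a0\<bar> \<bar>b0 - b0\<bar>"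
    by (intro tendsto_intros assms(1,2))
  then have "(\<lambda>n. max \<bar>a n - a0\<bar> \<bar>b n - b0\<bar>) \<longlonglongrightarrow> 0"
    by simp
  from tendsto_ereal[OF this] show "(\<lambda>n. ereal (max \<bar>a n - a0\<bar> \<bar>b n - b0\<bar>)) \<longlonglongrightarrow> 0"
    by (simp only: zero_ereal_def)
qed simp

lemma upper_variations_tendsto:
  fixes \<mu> :: "nat \<Rightarrow> 'a::{metric_space, second_countable_topology} set \<Rightarrow> real"
  assumes lc: "locally_compact_space (euclidean :: 'a topology)"
    and sm: "\<And>n. signed_measure borel (\<mu> n)" "signed_measure borel \<nu>"
    and wide: "\<And>\<phi>. \<phi> \<in> Cc \<Longrightarrow> (\<lambda>n. signed_integral borel (\<mu> n) \<phi>) \<longlonglongrightarrow> signed_integral borel \<nu> \<phi>"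
    and tv: "limsup (\<lambda>n. total_variation borel (\<mu> n) UNIV) \<le> total_variation borel \<nu> UNIV"
  shows "(\<lambda>n. upper_variation borel (\<mu> n) UNIV) \<longlonglongrightarrow> upper_variation borel \<nu> UNIV"
    and "(\<lambda>n. upper_variation borel (\<lambda>B. - \<mu> n B) UNIV) \<longlonglongrightarrow> upper_variation borel (\<lambda>B. - \<nu> B) UNIV"
proof -
  have sm_neg: "\<And>n. signed_measure borel (\<lambda>B. - \<mu> n B)" "signed_measure borel (\<lambda>B. - \<nu> B)"
    using sm by (simp_all add: signed_measure_uminus)
  have wide_neg: "(\<lambda>n. signed_integral borel (\<lambda>B. - \<mu> n B) \<phi>) \<longlonglongrightarrow> signed_integral borel (\<lambda>B. - \<nu> B) \<phi>"
    if "\<phi> \<in> Cc" for \<phi>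
    using tendsto_minus[OF wide[OF that]] by (simp add: signed_integral_uminus)
  have tv': "limsup (\<lambda>n. ereal (upper_variation borel (\<mu> n) UNIV + upper_variation borel (\<lambda>B. - \<mu> n B) UNIV))
      \<le> ereal (upper_variation borel \<nu> UNIV + upper_variation borel (\<lambda>B. - \<nu> B) UNIV)"
    using tv total_variation_eq[OF sm(1)] total_variation_eq[OF sm(2)] by simp
  note lower = upper_variation_lower_semicontinuous[OF lc sm wide]
    upper_variation_lower_semicontinuous[OF lc sm_neg wide_neg]
  show "(\<lambda>n. upper_variation borel (\<mu> n) UNIV) \<longlonglongrightarrow> upper_variation borel \<nu> UNIV"
    by (rule tendsto_of_lower_bounds_and_limsup_sum(1)[OF lower tv'])
  show "(\<lambda>n. upper_variation borel (\<lambda>B. - \<mu> n B) UNIV) \<longlonglongrightarrow> upper_variation borel (\<lambda>B. - \<nu> B) UNIV"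
    by (rule tendsto_of_lower_bounds_and_limsup_sum(2)[OF lower tv'])
qed

theorem proposition3p1:
  fixes \<mu> :: "nat \<Rightarrow> 'a::{metric_space, second_countable_topology} set \<Rightarrow> real"
    and \<nu> :: "'a set \<Rightarrow> real"
  assumes "locally_compact_space (euclidean :: 'a topology)"
    and "\<And>n. signed_measure borel (\<mu> n)"
    and "signed_measure borel \<nu>"
    and "\<And>\<phi>. \<phi> \<in> Cc \<Longrightarrow>
           (\<lambda>n. signed_integral borel (\<mu> n) \<phi>) \<longlonglongrightarrow> signed_integral borel \<nu> \<phi>"
    and "limsup (\<lambda>n. total_variation borel (\<mu> n) UNIV) \<le> total_variation borel \<nu> UNIV"
  shows "(\<lambda>n. hausdorff_dist (signed_range borel (\<mu> n)) (signed_range borel \<nu>)) \<longlonglongrightarrow> 0"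
proof -
  note sm = assms(2,3)
  define p q where "p n = upper_variation borel (\<mu> n) UNIV"
    and "q n = upper_variation borel (\<lambda>B. - \<mu> n B) UNIV" for n
  define P Q where "P = upper_variation borel \<nu> UNIV"
    and "Q = upper_variation borel (\<lambda>B. - \<nu> B) UNIV"
  have "p \<longlonglongrightarrow> P" "q \<longlonglongrightarrow> Q"
    using upper_variations_tendsto[OF assms] by (simp_all add: p_def[abs_def] q_def[abs_def] P_def Q_def)
  moreover have "- q n \<le> p n" "- Q \<le> P" for n
    unfolding p_def q_def P_def Q_def
    using upper_variation_nonneg[OF sm(1)] upper_variation_nonneg[OF signed_measure_uminus[OF sm(1)]]
      upper_variation_nonneg[OF sm(2)] upper_variation_nonneg[OF signed_measure_uminus[OF sm(2)]]
    by (meson neg_le_0_iff_le order.trans)+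
  ultimately have "(\<lambda>n. hausdorff_dist {- q n..p n} {- Q..P}) \<longlonglongrightarrow> 0"
    by (intro hausdorff_dist_interval_tendsto tendsto_minus)
  moreover have "signed_range borel (\<mu> n) = {- q n..p n}" "signed_range borel \<nu> = {- Q..P}" for n
    using signed_range_eq_interval[OF sm(1)] signed_range_eq_interval[OF sm(2)]
    by (simp_all add: p_def q_def P_def Q_def)
  ultimately show ?thesis
    by simp
qed

end
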